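(* Let $k\ge1$ and let $a\ge b$ be the dimensions of irreducible algebraic sets $A,B\subset\mathbb{C}^k$; put $m=2k-a-b$. Let $h^*$ and $h_0$ be integers with $b\ge h^*>\dim(A\cap B)$ and $\max(a+b-k,0)\le h_0\le$ the minimum dimension of any irreducible component of $A\cap B$. Let $\mathbb A\in\mathbb{C}^{(a+b)\times k}$, $\mathbf B\in\mathbb{C}^{(a+b)\times k}$, $\mathbf C\in\mathbb{C}^{k\times 2k}$ be generic, set $\mathbf A=[\mathbb A\ \ -\mathbb A]\in\mathbb{C}^{(a+b)\times 2k}$, and for $0\le h\le k$ let $\mathbf Y_h=\mathbf A+\mathbf B\mathbf P_h\mathbf C\in\mathbb{C}^{(a+b)\times 2k}$. Then for any integers $j,i$ with $h_0\le j<i\le h^*$ there exist matrices $E\in\mathbb{C}^{2k\times(m-i+j)}$ and $F,G\in\mathbb{C}^{2k\times(i-j)}$ such that (1) the columns of $[E\ \ F]$ form a basis of the null space of $\mathbf Y_i$; (2) the columns of $[E\ \ G]$ form a basis of the null space of $\mathbf Y_j$; (3) $\mathbf P_{ji}\mathbf C F=\mathbf P_{ji}\mathbf C G$ equals the $k\times(i-j)$ matrix whose rows $j+1,\dots,i$ form the identity matrix $I_{i-j}$ and whose other rows are zero.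
   Context: For $0\le h\le k$, $\mathbf P_h=\mathrm{diag}(1,\dots,1,0,\dots,0)$ is the $k\times k$ diagonal matrix with $h$ ones followed by $k-h$ zeros. For $0\le j\le i\le k$, $\mathbf P_{ji}=\mathrm{diag}(0,\dots,0,1,\dots,1,0,\dots,0)$ is the $k\times k$ diagonal matrix with $j$ zeros, then $i-j$ ones, then $k-i$ zeros (so $\mathbf P_j+\mathbf P_{ji}=\mathbf P_i$). "Generic" means for all choices outside a proper algebraic subset of the parameter space (e.g. random complex entries). *)

theory Defs
  imports "Jordan_Normal_Form.Matrix" "HOL-Library.Nat_Bijection"
begin

inductive poly_fun :: "((nat \<Rightarrow> complex) \<Rightarrow> complex) \<Rightarrow> bool" where
  pf_const: "poly_fun (\<lambda>x. c)"
| pf_var: "poly_fun (\<lambda>x. x i)"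
| pf_add: "poly_fun p \<Longrightarrow> poly_fun q \<Longrightarrow> poly_fun (\<lambda>x. p x + q x)"
| pf_mul: "poly_fun p \<Longrightarrow> poly_fun q \<Longrightarrow> poly_fun (\<lambda>x. p x * q x)"

definition vcoords :: "nat \<Rightarrow> complex vec \<Rightarrow> (nat \<Rightarrow> complex)" where
  "vcoords k v = (\<lambda>i. if i < k then v $ i else 0)"

definition alg_set :: "nat \<Rightarrow> complex vec set \<Rightarrow> bool" where
  "alg_set k S \<longleftrightarrow> (\<exists>P. finite P \<and> (\<forall>p\<in>P. poly_fun p) \<and>
      S = {v \<in> carrier_vec k. \<forall>p\<in>P. p (vcoords k v) = 0})"

definition irreducible_alg :: "nat \<Rightarrow> complex vec set \<Rightarrow> bool" where
  "irreducible_alg k S \<longleftrightarrow> alg_set k S \<and> S \<noteq> {} \<and>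
     (\<forall>S1 S2. alg_set k S1 \<and> alg_set k S2 \<and> S = S1 \<union> S2 \<longrightarrow> S1 = S \<or> S2 = S)"

definition alg_chain :: "nat \<Rightarrow> complex vec set \<Rightarrow> nat \<Rightarrow> bool" where
  "alg_chain k S n \<longleftrightarrow> (\<exists>Z :: nat \<Rightarrow> complex vec set.
      (\<forall>i\<le>n. irreducible_alg k (Z i) \<and> Z i \<subseteq> S) \<and> (\<forall>i<n. Z i \<subset> Z (Suc i)))"

definition alg_dim :: "nat \<Rightarrow> complex vec set \<Rightarrow> int" where
  "alg_dim k S = (if S = {} then -1 else int (Max {n. alg_chain k S n}))"

definition irr_component :: "nat \<Rightarrow> complex vec set \<Rightarrow> complex vec set \<Rightarrow> bool" where
  "irr_component k S Z \<longleftrightarrow> irreducible_alg k Z \<and> Z \<subseteq> S \<and>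
     (\<forall>W. irreducible_alg k W \<and> Z \<subseteq> W \<and> W \<subseteq> S \<longrightarrow> W = Z)"

definition hconcat :: "'a mat \<Rightarrow> 'a mat \<Rightarrow> 'a mat" where
  "hconcat A B = mat (dim_row A) (dim_col A + dim_col B)
     (\<lambda>(r,c). if c < dim_col A then A $$ (r,c) else B $$ (r, c - dim_col A))"

definition P_mat :: "nat \<Rightarrow> nat \<Rightarrow> complex mat" where
  "P_mat k h = mat k k (\<lambda>(r,c). if r = c \<and> r < h then 1 else 0)"

definition P_mat2 :: "nat \<Rightarrow> nat \<Rightarrow> nat \<Rightarrow> complex mat" where
  "P_mat2 k j i = mat k k (\<lambda>(r,c). if r = c \<and> j \<le> r \<and> r < i then 1 else 0)"

text \<open>k x (i-j) matrix whose rows j+1..i (1-based) form the identity, others zero.\<close>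
definition id_block :: "nat \<Rightarrow> nat \<Rightarrow> nat \<Rightarrow> complex mat" where
  "id_block k j i = mat k (i - j) (\<lambda>(r,c). if r = j + c then 1 else 0)"

definition null_basis :: "complex mat \<Rightarrow> complex mat \<Rightarrow> bool" where
  "null_basis Y M \<longleftrightarrow> dim_row M = dim_col Y \<and>
     (\<forall>c \<in> carrier_vec (dim_col M). M *\<^sub>v c = 0\<^sub>v (dim_row M) \<longrightarrow> c = 0\<^sub>v (dim_col M)) \<and>
     (\<forall>v \<in> carrier_vec (dim_col Y). Y *\<^sub>v v = 0\<^sub>v (dim_row Y) \<longleftrightarrow>
         (\<exists>c \<in> carrier_vec (dim_col M). v = M *\<^sub>v c))"

definition mcoord :: "complex mat \<Rightarrow> nat \<Rightarrow> complex" where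
  "mcoord M n = (case prod_decode n of (r,c) \<Rightarrow>
      if r < dim_row M \<and> c < dim_col M then M $$ (r,c) else 0)"

definition coords3 :: "complex mat \<Rightarrow> complex mat \<Rightarrow> complex mat \<Rightarrow> nat \<Rightarrow> complex" where
  "coords3 M1 M2 M3 n = (case prod_decode n of (t, rc) \<Rightarrow>
      if t = 0 then mcoord M1 rc else if t = 1 then mcoord M2 rc
      else if t = 2 then mcoord M3 rc else 0)"

text \<open>A property holds for generic (M1,M2,M3) in the parameter space
  C^(r1 x c1) x C^(r2 x c2) x C^(r3 x c3): outside a proper algebraic subset,
  i.e. whenever some polynomial in the entries, not vanishing identically on the
  parameter space, is nonzero.\<close>
definition generic3 :: "nat \<Rightarrow> nat \<Rightarrow> nat \<Rightarrow> nat \<Rightarrow> nat \<Rightarrow> nat \<Rightarrow>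
    (complex mat \<Rightarrow> complex mat \<Rightarrow> complex mat \<Rightarrow> bool) \<Rightarrow> bool" where
  "generic3 r1 c1 r2 c2 r3 c3 Q \<longleftrightarrow> (\<exists>p. poly_fun p \<and>
     (\<exists>M1 \<in> carrier_mat r1 c1. \<exists>M2 \<in> carrier_mat r2 c2. \<exists>M3 \<in> carrier_mat r3 c3.
        p (coords3 M1 M2 M3) \<noteq> 0) \<and>
     (\<forall>M1 \<in> carrier_mat r1 c1. \<forall>M2 \<in> carrier_mat r2 c2. \<forall>M3 \<in> carrier_mat r3 c3.
        p (coords3 M1 M2 M3) \<noteq> 0 \<longrightarrow> Q M1 M2 M3))"

end

theory Submission
  imports Defs "Jordan_Normal_Form.Determinant"
begin

(* Write Y_h = [A | B P_h] L with L = [I, -I; C]. For generic C the matrix L is invertible, so the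
   null space of Y_h is L^-1 times that of the reduced matrix [A | B P_h]. When a + b <= k + h, the
   first a + b columns of [A | B P_h] are those of [A | B]; for generic A, B this square block Z is
   invertible, and the null space is spanned by the vectors e_q - Z^-1 (column q), one for every
   remaining position q. Among these columns only k+j, ..., k+i-1 differ between h = i and h = j, so
   listing those positions last yields bases [E F] and [E G] with a common part E. Finally C L^-1 = [0 I],
   hence P_ji C F and P_ji C G read off the coordinates k+j, ..., k+i-1 of the basis vectors, which
   form an identity block. *)

lemma poly_fun_sum:
  assumes "finite S" and "\<And>s. s \<in> S \<Longrightarrow> poly_fun (f s)"
  shows "poly_fun (\<lambda>x. \<Sum>s\<in>S. f s x)"
  using assms by (induction S rule: finite_induct) (simp_all add: pf_const pf_add)

lemma poly_fun_prod:
  assumes "finite S" and "\<And>s. s \<in> S \<Longrightarrow> poly_fun (f s)"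
  shows "poly_fun (\<lambda>x. \<Prod>s\<in>S. f s x)"
  using assms by (induction S rule: finite_induct) (simp_all add: pf_const pf_mul)

lemma poly_fun_det:
  assumes carrier: "\<And>x. M x \<in> carrier_mat n n"
    and entries: "\<And>r c. r < n \<Longrightarrow> c < n \<Longrightarrow> poly_fun (\<lambda>x. M x $$ (r, c))"
  shows "poly_fun (\<lambda>x. det (M x))"
proof -
  have "det (M x) = (\<Sum>p\<in>{p. p permutes {0..<n}}. signof p * (\<Prod>r = 0..<n. M x $$ (r, p r)))" for x
    using carrier[of x] by (simp add: det_def)
  moreover have "poly_fun (\<lambda>x. \<Sum>p\<in>{p. p permutes {0..<n}}. signof p * (\<Prod>r = 0..<n. M x $$ (r, p r)))"
    by (intro poly_fun_sum pf_mul pf_const poly_fun_prod entries)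
      (auto simp: finite_permutations permutes_in_image)
  ultimately show ?thesis by simp
qed

section \<open>Matrix algebra\<close>

definition selection_mat :: "nat \<Rightarrow> nat \<Rightarrow> (nat \<Rightarrow> nat) \<Rightarrow> 'a :: semiring_1 mat" where
  "selection_mat N d pos = mat N d (\<lambda>(r, c). if r = pos c then 1 else 0)"

lemma selection_mat_carrier [simp]: "selection_mat N d pos \<in> carrier_mat N d"
  and dim_selection_mat [simp]: "dim_row (selection_mat N d pos) = N" "dim_col (selection_mat N d pos) = d"
  by (simp_all add: selection_mat_def)

lemma index_selection_mat [simp]:
  "r < N \<Longrightarrow> c < d \<Longrightarrow> selection_mat N d pos $$ (r, c) = (if r = pos c then 1 else 0)"
  by (simp add: selection_mat_def)

lemma mult_selection_mat:
  fixes Y :: "'a :: semiring_1 mat"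
  assumes "Y \<in> carrier_mat n N" and "\<And>c. c < d \<Longrightarrow> pos c < N"
  shows "Y * selection_mat N d pos = mat n d (\<lambda>(r, c). Y $$ (r, pos c))"
proof (rule eq_matI)
  fix r c assume "r < dim_row (mat n d (\<lambda>(r, c). Y $$ (r, pos c)))"
    and "c < dim_col (mat n d (\<lambda>(r, c). Y $$ (r, pos c)))"
  then have rc: "r < n" "c < d" by simp_all
  have "(Y * selection_mat N d pos) $$ (r, c) = (\<Sum>q<N. Y $$ (r, q) * (if q = pos c then 1 else 0))"
    using assms(1) rc by (simp add: scalar_prod_def atLeast0LessThan)
  also have "\<dots> = Y $$ (r, pos c)"
    using assms(2)[OF rc(2)] by (simp add: if_distrib[of "(*) _"] sum.delta' cong: if_cong)
  finally show "(Y * selection_mat N d pos) $$ (r, c) = mat n d (\<lambda>(r, c). Y $$ (r, pos c)) $$ (r, c)"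
    using rc by simp
qed (use assms in auto)

lemma transpose_selection_mat_mult:
  fixes X :: "'a :: comm_semiring_1 mat"
  assumes "X \<in> carrier_mat N m" and "\<And>c. c < d \<Longrightarrow> pos c < N"
  shows "transpose_mat (selection_mat N d pos) * X = mat d m (\<lambda>(c, q). X $$ (pos c, q))"
proof -
  have "transpose_mat (selection_mat N d pos) * X = transpose_mat (transpose_mat X * selection_mat N d pos)"
    using transpose_mult[of "transpose_mat X" m N "selection_mat N d pos" d] assms(1) by simp
  also have "\<dots> = mat d m (\<lambda>(c, q). X $$ (pos c, q))"
    using assms by (subst mult_selection_mat[of _ m N]) (auto intro!: eq_matI)
  finally show ?thesis .
qed

lemma index_selection_mat_mult_transpose:
  assumes inj: "inj_on pos {0..<d}" and rq: "r < N" "q < N"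
  shows "(selection_mat N d pos * transpose_mat (selection_mat N d pos)) $$ (r, q)
    = (if r = q \<and> r \<in> pos ` {0..<d} then 1 else (0 :: 'a :: semiring_1))"
proof -
  have "(selection_mat N d pos * transpose_mat (selection_mat N d pos)) $$ (r, q)
      = (\<Sum>c\<in>{0..<d}. (if r = pos c then 1 else 0) * (if q = pos c then 1 else (0 :: 'a)))"
    using rq by (simp add: scalar_prod_def)
  also have "\<dots> = (\<Sum>c\<in>{0..<d}. if c \<in> {c. pos c = r} then (if r = q then 1 else 0) else 0)"
    by (rule sum.cong) auto
  also have "\<dots> = (if r = q \<and> r \<in> pos ` {0..<d} then 1 else 0)"
  proof (cases "r \<in> pos ` {0..<d}")
    case True
    then obtain c0 where c0: "c0 \<in> {0..<d}" "pos c0 = r" by auto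
    then have "{0..<d} \<inter> {c. pos c = r} = {c0}" using inj by (auto dest: inj_onD)
    then show ?thesis using True by (simp add: sum.If_cases)
  next
    case False
    then have "{0..<d} \<inter> {c. pos c = r} = {}" by auto
    then show ?thesis using False by (simp add: sum.If_cases)
  qed
  finally show ?thesis .
qed

lemma transpose_selection_mat_mult_selection_mat:
  assumes "\<And>c. c < d \<Longrightarrow> pos c < N"
  shows "transpose_mat (selection_mat N d pos) * selection_mat N d' pos'
    = (mat d d' (\<lambda>(c, c'). if pos c = pos' c' then 1 else 0) :: 'a :: comm_semiring_1 mat)"
proof -
  have "transpose_mat (selection_mat N d pos) * selection_mat N d' pos'
      = (mat d d' (\<lambda>(c, c'). selection_mat N d' pos' $$ (pos c, c')) :: 'a mat)"
    by (rule transpose_selection_mat_mult[OF selection_mat_carrier assms])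
  also have "\<dots> = mat d d' (\<lambda>(c, c'). if pos c = pos' c' then 1 else 0)"
    using assms by (intro eq_matI) auto
  finally show ?thesis .
qed

lemma selection_mats_complementary:
  assumes pos: "bij_betw pos {0..<d} {n..<N}"
  shows "transpose_mat (selection_mat N d pos) * selection_mat N d pos = (1\<^sub>m d :: 'a :: comm_semiring_1 mat)"
    and "transpose_mat (selection_mat N d pos) * selection_mat N n id = (0\<^sub>m d n :: 'a mat)"
    and "selection_mat N n id * transpose_mat (selection_mat N n id)
      + selection_mat N d pos * transpose_mat (selection_mat N d pos) = (1\<^sub>m N :: 'a mat)"
proof -
  have inj: "inj_on pos {0..<d}" and img: "pos ` {0..<d} = {n..<N}"
    using pos by (simp_all add: bij_betw_def)
  then have range: "pos c < N" "n \<le> pos c" if "c < d" for c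
    using that by auto
  show "transpose_mat (selection_mat N d pos) * selection_mat N d pos = (1\<^sub>m d :: 'a mat)"
    using range
    by (subst transpose_selection_mat_mult_selection_mat) (auto intro!: eq_matI simp: inj_on_eq_iff[OF inj])
  show "transpose_mat (selection_mat N d pos) * selection_mat N n id = (0\<^sub>m d n :: 'a mat)"
    using range by (subst transpose_selection_mat_mult_selection_mat) (auto intro!: eq_matI, fastforce)
  show "selection_mat N n id * transpose_mat (selection_mat N n id)
      + selection_mat N d pos * transpose_mat (selection_mat N d pos) = (1\<^sub>m N :: 'a mat)"
  proof (rule eq_matI)
    fix r q assume "r < dim_row (1\<^sub>m N :: 'a mat)" "q < dim_col (1\<^sub>m N :: 'a mat)"
    then show "(selection_mat N n id * transpose_mat (selection_mat N n id)
        + selection_mat N d pos * transpose_mat (selection_mat N d pos)) $$ (r, q) = (1\<^sub>m N :: 'a mat) $$ (r, q)"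
      using inj img by (auto simp del: index_mult_mat(1) simp add: index_selection_mat_mult_transpose)
  qed simp_all
qed

lemma index_selection_mat_id_mult:
  fixes W :: "'a :: semiring_1 mat"
  assumes "W \<in> carrier_mat n m" and "r < N" and "c < m"
  shows "(selection_mat N n id * W) $$ (r, c) = (if r < n then W $$ (r, c) else 0)"
proof -
  have "(selection_mat N n id * W) $$ (r, c) = (\<Sum>q<n. (if r = q then 1 else 0) * W $$ (q, c))"
    using assms by (simp add: scalar_prod_def atLeast0LessThan)
  also have "\<dots> = (if r < n then W $$ (r, c) else 0)"
    by (simp add: if_distrib[of "\<lambda>t. t * _"] sum.delta cong: if_cong)
  finally show ?thesis .
qed

lemma dim_hconcat [simp]:
  "dim_row (hconcat X X') = dim_row X" "dim_col (hconcat X X') = dim_col X + dim_col X'"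
  by (simp_all add: hconcat_def)

lemma hconcat_carrier [simp]:
  "X \<in> carrier_mat n p \<Longrightarrow> X' \<in> carrier_mat n q \<Longrightarrow> hconcat X X' \<in> carrier_mat n (p + q)"
  by (simp add: hconcat_def)

lemma index_hconcat:
  "X \<in> carrier_mat n p \<Longrightarrow> X' \<in> carrier_mat n q \<Longrightarrow> r < n \<Longrightarrow> c < p + q \<Longrightarrow>
    hconcat X X' $$ (r, c) = (if c < p then X $$ (r, c) else X' $$ (r, c - p))"
  by (auto simp: hconcat_def)

lemma col_hconcat:
  "X \<in> carrier_mat n p \<Longrightarrow> X' \<in> carrier_mat n q \<Longrightarrow> c < p + q \<Longrightarrow>
    col (hconcat X X') c = (if c < p then col X c else col X' (c - p))"
  by (intro eq_vecI) (auto simp: hconcat_def)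

lemma hconcat_as_four_block_mat:
  "X \<in> carrier_mat n p \<Longrightarrow> X' \<in> carrier_mat n q \<Longrightarrow>
    hconcat X X' = four_block_mat X X' (0\<^sub>m 0 p) (0\<^sub>m 0 q)"
  by (rule eq_matI) (auto simp: hconcat_def)

lemma mult_hconcat:
  fixes A X X' :: "'a :: semiring_0 mat"
  assumes "A \<in> carrier_mat m n" "X \<in> carrier_mat n p" "X' \<in> carrier_mat n q"
  shows "A * hconcat X X' = hconcat (A * X) (A * X')"
proof (rule eq_matI)
  fix r c assume "r < dim_row (hconcat (A * X) (A * X'))" "c < dim_col (hconcat (A * X) (A * X'))"
  then have "r < m" "c < p + q" using assms by (simp_all add: hconcat_def)
  moreover have "dim_row A = m" "dim_col X = p" "dim_col X' = q" using assms by auto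
  ultimately show "(A * hconcat X X') $$ (r, c) = hconcat (A * X) (A * X') $$ (r, c)"
    using assms by (simp add: col_hconcat index_hconcat[of "A * X" m p "A * X'" q])
qed (use assms in \<open>simp_all add: hconcat_def\<close>)

lemma hconcat_mult_append_rows:
  fixes X X' L1 L2 :: "'a :: semiring_0 mat"
  assumes "X \<in> carrier_mat n p" "X' \<in> carrier_mat n q" "L1 \<in> carrier_mat p m" "L2 \<in> carrier_mat q m"
  shows "hconcat X X' * (L1 @\<^sub>r L2) = X * L1 + X' * L2"
proof -
  have "hconcat X X' * (L1 @\<^sub>r L2)
      = four_block_mat X X' (0\<^sub>m 0 p) (0\<^sub>m 0 q) * four_block_mat L1 (0\<^sub>m p 0) L2 (0\<^sub>m q 0)"
    using assms by (simp add: hconcat_as_four_block_mat append_rows_def)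
  also have "\<dots> = four_block_mat (X * L1 + X' * L2) (X * 0\<^sub>m p 0 + X' * 0\<^sub>m q 0)
      (0\<^sub>m 0 p * L1 + 0\<^sub>m 0 q * L2) (0\<^sub>m 0 p * 0\<^sub>m p 0 + 0\<^sub>m 0 q * 0\<^sub>m q 0)"
    using assms by (intro mult_four_block_mat) auto
  also have "\<dots> = X * L1 + X' * L2"
    using assms by (intro eq_matI) auto
  finally show ?thesis .
qed

lemma hconcat_selection_mat:
  "hconcat (selection_mat N d pos) (selection_mat N d' pos')
    = selection_mat N (d + d') (\<lambda>c. if c < d then pos c else pos' (c - d))"
  by (rule eq_matI) (auto simp: hconcat_def)

lemma minus_add_cancel_mat:
  fixes A B :: "'a :: group_add mat"
  assumes "A \<in> carrier_mat n m" and "B \<in> carrier_mat n m"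
  shows "(A - B) + B = A"
proof -
  have dims: "dim_row A = n" "dim_col A = m" "dim_row B = n" "dim_col B = m" using assms by auto
  show ?thesis by (rule eq_matI) (simp_all add: dims)
qed

lemma inverse_mat_of_det:
  fixes A :: "'a :: field mat"
  assumes "A \<in> carrier_mat n n" and "det A \<noteq> 0"
  obtains B where "B \<in> carrier_mat n n" "A * B = 1\<^sub>m n" "B * A = 1\<^sub>m n"
  using det_non_zero_imp_unit[OF assms, unfolded Units_def, of "()"] that
  by (auto simp: ring_mat_def)

section \<open>Null bases\<close>

lemma null_basisI:
  fixes Y M K R :: "complex mat"
  assumes Y: "Y \<in> carrier_mat n N" and M: "M \<in> carrier_mat N d"
    and K: "K \<in> carrier_mat d N" and R: "R \<in> carrier_mat N n"
    and YM: "Y * M = 0\<^sub>m n d" and KM: "K * M = 1\<^sub>m d" and MK: "M * K + R * Y = 1\<^sub>m N"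
  shows "null_basis Y M"
  unfolding null_basis_def
proof (intro conjI ballI impI)
  show "dim_row M = dim_col Y" using Y M by simp
next
  fix c assume c: "c \<in> carrier_vec (dim_col M)" and Mc: "M *\<^sub>v c = 0\<^sub>v (dim_row M)"
  have "c = (K * M) *\<^sub>v c" using KM c M by simp
  also have "\<dots> = K *\<^sub>v (M *\<^sub>v c)" using K M c by simp
  also have "\<dots> = 0\<^sub>v d" using Mc K M by auto
  finally show "c = 0\<^sub>v (dim_col M)" using M by simp
next
  fix v :: "complex vec" assume v: "v \<in> carrier_vec (dim_col Y)"
  show "Y *\<^sub>v v = 0\<^sub>v (dim_row Y) \<longleftrightarrow> (\<exists>c\<in>carrier_vec (dim_col M). v = M *\<^sub>v c)"
  proof
    assume Yv: "Y *\<^sub>v v = 0\<^sub>v (dim_row Y)"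
    have "v = (M * K + R * Y) *\<^sub>v v" using MK v Y by simp
    also have "\<dots> = M *\<^sub>v (K *\<^sub>v v) + R *\<^sub>v (Y *\<^sub>v v)"
      using M K R Y v by (simp add: add_mult_distrib_mat_vec[of _ N N])
    also have "\<dots> = M *\<^sub>v (K *\<^sub>v v)" using Yv M K R Y v by auto
    finally show "\<exists>c\<in>carrier_vec (dim_col M). v = M *\<^sub>v c"
      using K M v Y by (intro bexI[of _ "K *\<^sub>v v"]) auto
  next
    assume "\<exists>c\<in>carrier_vec (dim_col M). v = M *\<^sub>v c"
    then obtain c where c: "c \<in> carrier_vec d" and v_eq: "v = M *\<^sub>v c" using M by auto
    have "Y *\<^sub>v v = (Y * M) *\<^sub>v c" using Y M c v_eq by simp
    then show "Y *\<^sub>v v = 0\<^sub>v (dim_row Y)" using YM c Y by auto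
  qed
qed

lemma null_basis_mult_invertible:
  fixes Y L L' M :: "complex mat"
  assumes Y: "Y \<in> carrier_mat n N" and L: "L \<in> carrier_mat N N" and L': "L' \<in> carrier_mat N N"
    and LL': "L * L' = 1\<^sub>m N" and L'L: "L' * L = 1\<^sub>m N" and basis: "null_basis Y M"
  shows "null_basis (Y * L) (L' * M)"
proof -
  define d where "d = dim_col M"
  have M: "M \<in> carrier_mat N d" using basis Y by (auto simp: null_basis_def d_def)
  have indep: "\<And>c. c \<in> carrier_vec d \<Longrightarrow> M *\<^sub>v c = 0\<^sub>v N \<Longrightarrow> c = 0\<^sub>v d"
    and kernel: "\<And>w. w \<in> carrier_vec N \<Longrightarrow> Y *\<^sub>v w = 0\<^sub>v n \<longleftrightarrow> (\<exists>c\<in>carrier_vec d. w = M *\<^sub>v c)"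
    using basis Y M by (auto simp: null_basis_def)
  have transfer: "v = L' *\<^sub>v w \<longleftrightarrow> L *\<^sub>v v = w" if "v \<in> carrier_vec N" "w \<in> carrier_vec N" for v w
  proof
    assume "v = L' *\<^sub>v w"
    then have "L *\<^sub>v v = (L * L') *\<^sub>v w" using L L' that by simp
    then show "L *\<^sub>v v = w" using LL' that by simp
  next
    assume "L *\<^sub>v v = w"
    then have "L' *\<^sub>v w = (L' * L) *\<^sub>v v" using L L' that by simp
    then show "v = L' *\<^sub>v w" using L'L that by simp
  qed
  show ?thesis
    unfolding null_basis_def
  proof (intro conjI ballI impI)
    show "dim_row (L' * M) = dim_col (Y * L)" using L L' by simp
  next
    fix c assume c: "c \<in> carrier_vec (dim_col (L' * M))" and "(L' * M) *\<^sub>v c = 0\<^sub>v (dim_row (L' * M))"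
    then have "0\<^sub>v N = L' *\<^sub>v (M *\<^sub>v c)" using L' M by auto
    then have "L *\<^sub>v 0\<^sub>v N = M *\<^sub>v c" using transfer[of "0\<^sub>v N" "M *\<^sub>v c"] c M L' by simp
    moreover have "L *\<^sub>v 0\<^sub>v N = 0\<^sub>v N" using L by (intro eq_vecI) auto
    ultimately have "M *\<^sub>v c = 0\<^sub>v N" by simp
    then show "c = 0\<^sub>v (dim_col (L' * M))" using indep c M by simp
  next
    fix v :: "complex vec" assume v: "v \<in> carrier_vec (dim_col (Y * L))"
    then have v': "v \<in> carrier_vec N" using L by simp
    have "(Y * L) *\<^sub>v v = 0\<^sub>v (dim_row (Y * L)) \<longleftrightarrow> (\<exists>c\<in>carrier_vec d. L *\<^sub>v v = M *\<^sub>v c)"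
      using kernel[of "L *\<^sub>v v"] Y L v' by simp
    also have "\<dots> \<longleftrightarrow> (\<exists>c\<in>carrier_vec d. v = (L' * M) *\<^sub>v c)"
      using transfer v' L' M by (auto simp del: assoc_mult_mat_vec simp: assoc_mult_mat_vec[OF L' M])
    finally show "(Y * L) *\<^sub>v v = 0\<^sub>v (dim_row (Y * L))
        \<longleftrightarrow> (\<exists>c\<in>carrier_vec (dim_col (L' * M)). v = (L' * M) *\<^sub>v c)"
      using M by simp
  qed
qed

text \<open>If Zi inverts the leading square block of Y, this is the projection onto the null space of Y
  along the first coordinates.\<close>

definition kernel_proj :: "complex mat \<Rightarrow> complex mat \<Rightarrow> complex mat" where
  "kernel_proj Zi Y = 1\<^sub>m (dim_col Y) - selection_mat (dim_col Y) (dim_row Y) id * (Zi * Y)"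

lemma kernel_proj_eq:
  "Y \<in> carrier_mat n N \<Longrightarrow> kernel_proj Zi Y = 1\<^sub>m N - selection_mat N n id * (Zi * Y)"
  by (simp add: kernel_proj_def)

lemma kernel_proj_carrier:
  assumes "Y \<in> carrier_mat n N"
  shows "kernel_proj Zi Y \<in> carrier_mat N N"
proof -
  have "dim_row Y = n" "dim_col Y = N" using assms by auto
  then show ?thesis unfolding kernel_proj_def by (intro carrier_matI) simp_all
qed

lemma kernel_proj_mult:
  fixes Y Zi J :: "complex mat"
  assumes Y: "Y \<in> carrier_mat n N" and Zi: "Zi \<in> carrier_mat n n" and J: "J \<in> carrier_mat N d"
  shows "kernel_proj Zi Y * J = J - selection_mat N n id * (Zi * (Y * J))"
proof -
  have T: "selection_mat N n id \<in> carrier_mat N n" by simp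
  have ZiY: "Zi * Y \<in> carrier_mat n N" using Zi Y by simp
  have "kernel_proj Zi Y * J = (1\<^sub>m N - selection_mat N n id * (Zi * Y)) * J"
    unfolding kernel_proj_eq[OF Y] ..
  also have "\<dots> = J - selection_mat N n id * (Zi * (Y * J))"
    by (simp only: minus_mult_distrib_mat[OF one_carrier_mat mult_carrier_mat[OF T ZiY] J]
        left_mult_one_mat[OF J] assoc_mult_mat[OF T ZiY J] assoc_mult_mat[OF Zi Y J])
  finally show ?thesis .
qed

lemma mult_kernel_proj:
  fixes Y Zi :: "complex mat"
  assumes Y: "Y \<in> carrier_mat n N" and Zi: "Zi \<in> carrier_mat n n"
    and right_inv: "(Y * selection_mat N n id) * Zi = 1\<^sub>m n"
  shows "Y * kernel_proj Zi Y = 0\<^sub>m n N"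
proof -
  define T :: "complex mat" where "T = selection_mat N n id"
  have T: "T \<in> carrier_mat N n" and ZiY: "Zi * Y \<in> carrier_mat n N"
    unfolding T_def using Zi Y by simp_all
  have TZiY: "T * (Zi * Y) \<in> carrier_mat N N" and YT: "Y * T \<in> carrier_mat n n"
    using T ZiY Y by simp_all
  have "Y * kernel_proj Zi Y = Y - Y * (T * (Zi * Y))"
    by (simp only: kernel_proj_eq[OF Y] T_def[symmetric] mult_minus_distrib_mat[OF Y one_carrier_mat TZiY]
        right_mult_one_mat[OF Y])
  also have "Y * (T * (Zi * Y)) = (Y * T * Zi) * Y"
    by (simp only: assoc_mult_mat[OF YT Zi Y] assoc_mult_mat[OF Y T ZiY])
  also have "\<dots> = Y" unfolding T_def right_inv by (rule left_mult_one_mat[OF Y])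
  finally show ?thesis by (simp only: minus_r_inv_mat[OF Y])
qed

lemma null_basis_kernel_proj:
  fixes Y Zi :: "complex mat"
  assumes Y: "Y \<in> carrier_mat n N" and Zi: "Zi \<in> carrier_mat n n"
    and left_inv: "Zi * (Y * selection_mat N n id) = 1\<^sub>m n"
    and right_inv: "(Y * selection_mat N n id) * Zi = 1\<^sub>m n"
    and pos: "bij_betw pos {0..<d} {n..<N}"
  shows "null_basis Y (kernel_proj Zi Y * selection_mat N d pos)"
proof -
  define T :: "complex mat" where "T = selection_mat N n id"
  define J :: "complex mat" where "J = selection_mat N d pos"
  define P where "P = kernel_proj Zi Y"
  have T: "T \<in> carrier_mat N n" and Tt: "transpose_mat T \<in> carrier_mat n N"
    and J: "J \<in> carrier_mat N d" and Jt: "transpose_mat J \<in> carrier_mat d N"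
    unfolding T_def J_def by simp_all
  have P: "P \<in> carrier_mat N N" unfolding P_def by (rule kernel_proj_carrier[OF Y])
  have W: "Zi * (Y * J) \<in> carrier_mat n d" using Y J Zi by simp
  note complementary = selection_mats_complementary[where 'a = complex, OF pos, folded T_def J_def]
  have PT: "P * T = 0\<^sub>m N n"
    unfolding P_def kernel_proj_mult[OF Y Zi T] T_def[symmetric] left_inv[folded T_def]
    using T by simp
  have PJ: "P * J = J - T * (Zi * (Y * J))"
    unfolding P_def T_def by (rule kernel_proj_mult[OF Y Zi J])
  have "P = P * (T * transpose_mat T + J * transpose_mat J)"
    unfolding complementary(3) by (simp only: right_mult_one_mat[OF P])
  also have "\<dots> = (P * T) * transpose_mat T + P * J * transpose_mat J"
    by (simp only: mult_add_distrib_mat[OF P mult_carrier_mat[OF T Tt] mult_carrier_mat[OF J Jt]]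
        assoc_mult_mat[OF P T Tt] assoc_mult_mat[OF P J Jt])
  also have "\<dots> = P * J * transpose_mat J"
    unfolding PT left_mult_zero_mat[OF Tt] by (rule left_add_zero_mat) (use P J Jt in simp)
  finally have PJJt: "P * J * transpose_mat J = P" by (rule sym)
  show ?thesis
    unfolding P_def[symmetric] J_def[symmetric]
  proof (rule null_basisI[OF Y _ Jt _ _ _ _])
    show "P * J \<in> carrier_mat N d" using P J by simp
    show "T * Zi \<in> carrier_mat N n" using T Zi by simp
    have YP: "Y * P = 0\<^sub>m n N" unfolding P_def by (rule mult_kernel_proj[OF Y Zi right_inv])
    show "Y * (P * J) = 0\<^sub>m n d"
      by (simp only: assoc_mult_mat[OF Y P J, symmetric] YP left_mult_zero_mat[OF J])
    have "transpose_mat J * (P * J) = transpose_mat J * J - (transpose_mat J * T) * (Zi * (Y * J))"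
      by (simp only: PJ mult_minus_distrib_mat[OF Jt J mult_carrier_mat[OF T W]] assoc_mult_mat[OF Jt T W])
    also have "\<dots> = 1\<^sub>m d - 0\<^sub>m d d" unfolding complementary(1,2) left_mult_zero_mat[OF W] ..
    also have "\<dots> = 1\<^sub>m d" by (rule eq_matI) simp_all
    finally show "transpose_mat J * (P * J) = 1\<^sub>m d" .
    have "P * J * transpose_mat J + T * Zi * Y = (1\<^sub>m N - T * (Zi * Y)) + T * (Zi * Y)"
      unfolding PJJt unfolding P_def kernel_proj_eq[OF Y] T_def[symmetric]
      by (simp only: assoc_mult_mat[OF T Zi Y])
    also have "\<dots> = 1\<^sub>m N" by (rule minus_add_cancel_mat[OF one_carrier_mat]) (use T Zi Y in simp)
    finally show "P * J * transpose_mat J + T * Zi * Y = 1\<^sub>m N" .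
  qed
qed

section \<open>The matrices Y_h\<close>

lemma index_mult_P_mat:
  assumes "X \<in> carrier_mat n k" and "r < n" and "t < k"
  shows "(X * P_mat k h) $$ (r, t) = (if t < h then X $$ (r, t) else 0)"
proof -
  have "(X * P_mat k h) $$ (r, t) = (\<Sum>q<k. X $$ (r, q) * (if q = t \<and> q < h then 1 else 0))"
    using assms by (simp add: P_mat_def scalar_prod_def atLeast0LessThan)
  also have "\<dots> = (\<Sum>q<k. if q = t then (if t < h then X $$ (r, t) else 0) else 0)"
    by (rule sum.cong) auto
  also have "\<dots> = (if t < h then X $$ (r, t) else 0)"
    using assms(3) by (simp add: sum.delta')
  finally show ?thesis .
qed

lemma P_mat_self: "P_mat k k = 1\<^sub>m k"
  by (rule eq_matI) (auto simp: P_mat_def)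

lemma hconcat_mult_P_mat_carrier:
  "AA \<in> carrier_mat n k \<Longrightarrow> BB \<in> carrier_mat n k \<Longrightarrow>
    hconcat AA (BB * P_mat k h) \<in> carrier_mat n (2 * k)"
  using hconcat_carrier[of AA n k "BB * P_mat k h" k] by (simp add: P_mat_def mult_2)

lemma index_P_mat2_mult:
  assumes "X \<in> carrier_mat k m" and "s < k" and "c < m"
  shows "(P_mat2 k j i * X) $$ (s, c) = (if j \<le> s \<and> s < i then X $$ (s, c) else 0)"
proof -
  have "(P_mat2 k j i * X) $$ (s, c) = (\<Sum>q<k. (if s = q \<and> j \<le> s \<and> s < i then 1 else 0) * X $$ (q, c))"
    using assms by (simp add: P_mat2_def scalar_prod_def atLeast0LessThan)
  also have "\<dots> = (\<Sum>q<k. if q = s then (if j \<le> s \<and> s < i then X $$ (s, c) else 0) else 0)"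
    by (rule sum.cong) auto
  also have "\<dots> = (if j \<le> s \<and> s < i then X $$ (s, c) else 0)"
    using assms(2) by (simp add: sum.delta')
  finally show ?thesis .
qed

lemma index_hconcat_mult_P_mat:
  assumes AA: "AA \<in> carrier_mat n k" and BB: "BB \<in> carrier_mat n k" and "r < n" and "q < 2 * k"
  shows "hconcat AA (BB * P_mat k h) $$ (r, q)
    = (if q < k then AA $$ (r, q) else if q < k + h then BB $$ (r, q - k) else 0)"
proof -
  have BP: "BB * P_mat k h \<in> carrier_mat n k" using BB by (simp add: P_mat_def)
  show ?thesis
    using assms index_hconcat[OF AA BP, of r q] index_mult_P_mat[OF BB, of r "q - k" h] by auto
qed

lemma hconcat_mult_P_mat_selection_cong:
  assumes AA: "AA \<in> carrier_mat n k" and BB: "BB \<in> carrier_mat n k"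
    and pos: "\<And>c. c < d \<Longrightarrow> pos c < 2 * k"
    and same: "\<And>c. c < d \<Longrightarrow> pos c < k + h \<longleftrightarrow> pos c < k + h'"
  shows "hconcat AA (BB * P_mat k h) * selection_mat (2 * k) d pos
    = hconcat AA (BB * P_mat k h') * selection_mat (2 * k) d pos"
proof -
  have cols: "hconcat AA (BB * P_mat k g) * selection_mat (2 * k) d pos
      = mat n d (\<lambda>(r, c). hconcat AA (BB * P_mat k g) $$ (r, pos c))" for g
    by (rule mult_selection_mat[OF hconcat_mult_P_mat_carrier[OF AA BB] pos])
  show ?thesis
    unfolding cols
    by (rule eq_matI) (use pos same in \<open>simp_all add: index_hconcat_mult_P_mat[OF AA BB]\<close>)
qed

definition lift_mat :: "nat \<Rightarrow> complex mat \<Rightarrow> complex mat" where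
  "lift_mat k C = hconcat (1\<^sub>m k) (- 1\<^sub>m k) @\<^sub>r C"

lemma lift_mat_carrier:
  assumes "C \<in> carrier_mat k (2 * k)"
  shows "lift_mat k C \<in> carrier_mat (2 * k) (2 * k)"
proof -
  have "hconcat (1\<^sub>m k) (- 1\<^sub>m k) \<in> carrier_mat k (2 * k)"
    using hconcat_carrier[of "1\<^sub>m k" k k "- 1\<^sub>m k" k] by (simp add: mult_2)
  from carrier_append_rows[OF this assms] show ?thesis by (simp add: lift_mat_def mult_2)
qed

lemma index_lift_mat:
  assumes C: "C \<in> carrier_mat k (2 * k)" and "r < 2 * k" and "c < 2 * k"
  shows "lift_mat k C $$ (r, c)
    = (if r < k then (if c = r then 1 else if c = k + r then - 1 else 0) else C $$ (r - k, c))"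
proof -
  have "dim_row C = k" "dim_col C = 2 * k" using C by auto
  then show ?thesis
    using assms(2,3) by (auto simp: lift_mat_def append_rows_def hconcat_def)
qed

lemma hconcat_uminus_plus_eq_lift_mat:
  assumes AA: "AA \<in> carrier_mat n k" and BB: "BB \<in> carrier_mat n k" and CC: "CC \<in> carrier_mat k (2 * k)"
  shows "hconcat AA (- AA) + BB * P_mat k h * CC = hconcat AA (BB * P_mat k h) * lift_mat k CC"
proof -
  have BP: "BB * P_mat k h \<in> carrier_mat n k" using BB by (simp add: P_mat_def)
  have I: "hconcat (1\<^sub>m k) (- 1\<^sub>m k) \<in> carrier_mat k (k + k)" by simp
  have CC': "CC \<in> carrier_mat k (k + k)" using CC by (simp add: mult_2)
  have "hconcat AA (BB * P_mat k h) * lift_mat k CC = AA * hconcat (1\<^sub>m k) (- 1\<^sub>m k) + BB * P_mat k h * CC"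
    unfolding lift_mat_def by (rule hconcat_mult_append_rows[OF AA BP I CC'])
  also have "AA * hconcat (1\<^sub>m k) (- 1\<^sub>m k) = hconcat AA (- AA)"
    using AA by (simp add: mult_hconcat[OF AA one_carrier_mat uminus_carrier_mat[OF one_carrier_mat]])
  finally show ?thesis by (rule sym)
qed

lemma shift_selection_mult_lift_mat:
  assumes CC: "CC \<in> carrier_mat k (2 * k)"
  shows "transpose_mat (selection_mat (2 * k) k ((+) k)) * lift_mat k CC = CC"
proof -
  have "transpose_mat (selection_mat (2 * k) k ((+) k)) * lift_mat k CC
      = mat k (2 * k) (\<lambda>(s, c). lift_mat k CC $$ (k + s, c))"
    by (rule transpose_selection_mat_mult[OF lift_mat_carrier[OF CC]]) simp
  also have "\<dots> = CC"
    by (rule eq_matI) (use CC in \<open>auto simp: index_lift_mat[OF CC]\<close>)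
  finally show ?thesis .
qed

text \<open>The non-pivot positions n, ..., 2k-1, listed so that k+j, ..., k+i-1 come last.\<close>

lemma bij_betw_free_positions:
  fixes n k i j :: nat
  assumes "n \<le> k + j" and "j < i" and "i \<le> k"
  shows "bij_betw (\<lambda>c. if c < 2 * k - n - (i - j)
        then (if c < k + j - n then n + c else c + n + (i - j))
        else k + j + (c - (2 * k - n - (i - j))))
    {0..<2 * k - n} {n..<2 * k}"
  by (rule bij_betw_byWitness[where f' = "\<lambda>q. if q < k + j then q - n
        else if q < k + i then 2 * k - n - (i - j) + (q - k - j) else q - n - (i - j)"])
    (use assms in auto)

lemma null_basis_lifted_kernel:
  fixes AA BB CC Li Zi :: "complex mat"
  assumes AA: "AA \<in> carrier_mat n k" and BB: "BB \<in> carrier_mat n k" and CC: "CC \<in> carrier_mat k (2 * k)"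
    and Li: "Li \<in> carrier_mat (2 * k) (2 * k)"
    and lift_inv: "lift_mat k CC * Li = 1\<^sub>m (2 * k)" "Li * lift_mat k CC = 1\<^sub>m (2 * k)"
    and Zi: "Zi \<in> carrier_mat n n"
    and lead_inv: "Zi * (hconcat AA BB * selection_mat (2 * k) n id) = 1\<^sub>m n"
      "(hconcat AA BB * selection_mat (2 * k) n id) * Zi = 1\<^sub>m n"
    and h: "n \<le> k + h" "h \<le> k"
    and pos: "bij_betw pos {0..<d} {n..<2 * k}"
  shows "null_basis (hconcat AA (- AA) + BB * P_mat k h * CC)
    (Li * (kernel_proj Zi (hconcat AA (BB * P_mat k h)) * selection_mat (2 * k) d pos))"
proof -
  define Yr where "Yr = hconcat AA (BB * P_mat k h)"
  have Yr: "Yr \<in> carrier_mat n (2 * k)" unfolding Yr_def by (rule hconcat_mult_P_mat_carrier[OF AA BB])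
  have "Yr * selection_mat (2 * k) n id = hconcat AA (BB * P_mat k k) * selection_mat (2 * k) n id"
    unfolding Yr_def by (rule hconcat_mult_P_mat_selection_cong[OF AA BB]) (use h in auto)
  also have "BB * P_mat k k = BB" using BB by (simp add: P_mat_self)
  finally have lead: "Yr * selection_mat (2 * k) n id = hconcat AA BB * selection_mat (2 * k) n id" .
  have "null_basis Yr (kernel_proj Zi Yr * selection_mat (2 * k) d pos)"
    by (rule null_basis_kernel_proj[OF Yr Zi _ _ pos]) (simp_all only: lead lead_inv)
  then have "null_basis (Yr * lift_mat k CC) (Li * (kernel_proj Zi Yr * selection_mat (2 * k) d pos))"
    by (rule null_basis_mult_invertible[OF Yr lift_mat_carrier[OF CC] Li lift_inv])
  then show ?thesis unfolding Yr_def hconcat_uminus_plus_eq_lift_mat[OF AA BB CC] .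
qed

lemma mult_inverse_lift_mat:
  fixes CC Li X :: "complex mat"
  assumes CC: "CC \<in> carrier_mat k (2 * k)" and Li: "Li \<in> carrier_mat (2 * k) (2 * k)"
    and lift_inv: "lift_mat k CC * Li = 1\<^sub>m (2 * k)" and X: "X \<in> carrier_mat (2 * k) m"
  shows "CC * (Li * X) = transpose_mat (selection_mat (2 * k) k ((+) k)) * X"
proof -
  define Cw where "Cw = (transpose_mat (selection_mat (2 * k) k ((+) k)) :: complex mat)"
  have Cw: "Cw \<in> carrier_mat k (2 * k)" and L: "lift_mat k CC \<in> carrier_mat (2 * k) (2 * k)"
    and LiX: "Li * X \<in> carrier_mat (2 * k) m"
    unfolding Cw_def using lift_mat_carrier[OF CC] Li X by simp_all
  have "CC * (Li * X) = (Cw * lift_mat k CC) * (Li * X)"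
    unfolding Cw_def shift_selection_mult_lift_mat[OF CC] ..
  also have "\<dots> = Cw * (lift_mat k CC * (Li * X))" by (rule assoc_mult_mat[OF Cw L LiX])
  also have "lift_mat k CC * (Li * X) = X"
    by (simp only: assoc_mult_mat[OF L Li X, symmetric] lift_inv left_mult_one_mat[OF X])
  finally show ?thesis unfolding Cw_def .
qed

lemma P_mat2_mult_lifted_kernel_block:
  fixes CC Li Y Zi :: "complex mat"
  assumes CC: "CC \<in> carrier_mat k (2 * k)" and Li: "Li \<in> carrier_mat (2 * k) (2 * k)"
    and lift_inv: "lift_mat k CC * Li = 1\<^sub>m (2 * k)"
    and Y: "Y \<in> carrier_mat n (2 * k)" and Zi: "Zi \<in> carrier_mat n n" and nj: "n \<le> k + j"
  shows "P_mat2 k j i * CC * (Li * (kernel_proj Zi Y * selection_mat (2 * k) (i - j) ((+) (k + j))))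
    = id_block k j i"
proof -
  define JF where "JF = (selection_mat (2 * k) (i - j) ((+) (k + j)) :: complex mat)"
  define W where "W = Zi * (Y * JF)"
  define X where "X = kernel_proj Zi Y * JF"
  have JF: "JF \<in> carrier_mat (2 * k) (i - j)" and P: "P_mat2 k j i \<in> carrier_mat k k"
    unfolding JF_def P_mat2_def by simp_all
  have W: "W \<in> carrier_mat n (i - j)" unfolding W_def using Zi Y JF by simp
  have X_eq: "X = JF - selection_mat (2 * k) n id * W"
    unfolding X_def W_def by (rule kernel_proj_mult[OF Y Zi JF])
  have X: "X \<in> carrier_mat (2 * k) (i - j)"
    unfolding X_eq by (rule minus_carrier_mat[OF mult_carrier_mat[OF selection_mat_carrier W]])
  have LiX: "Li * X \<in> carrier_mat (2 * k) (i - j)" using Li X by simp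
  have CC_Li_X: "CC * (Li * X) = mat k (i - j) (\<lambda>(s, c). X $$ (k + s, c))"
    unfolding mult_inverse_lift_mat[OF CC Li lift_inv X] by (rule transpose_selection_mat_mult[OF X]) simp
  show ?thesis
    unfolding JF_def[symmetric] X_def[symmetric]
  proof (rule eq_matI)
    fix s c assume "s < dim_row (id_block k j i)" "c < dim_col (id_block k j i)"
    then have sc: "s < k" "c < i - j" by (simp_all add: id_block_def)
    have "(P_mat2 k j i * CC * (Li * X)) $$ (s, c) = (if j \<le> s \<and> s < i then X $$ (k + s, c) else 0)"
      unfolding assoc_mult_mat[OF P CC LiX] CC_Li_X using sc by (simp add: index_P_mat2_mult[of _ k "i - j"])
    also have "\<dots> = id_block k j i $$ (s, c)"
      using sc nj W
      by (auto simp del: index_mult_mat(1) simp: X_eq JF_def id_block_def index_selection_mat_id_mult[OF W])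
    finally show "(P_mat2 k j i * CC * (Li * X)) $$ (s, c) = id_block k j i $$ (s, c)" .
  qed (use X in \<open>simp_all add: id_block_def P_mat2_def\<close>)
qed

definition shared_null_bases ::
    "nat \<Rightarrow> nat \<Rightarrow> complex mat \<Rightarrow> complex mat \<Rightarrow> complex mat \<Rightarrow> nat \<Rightarrow> nat \<Rightarrow> bool" where
  "shared_null_bases n k AA BB CC i j \<longleftrightarrow> (\<exists>E F G. E \<in> carrier_mat (2 * k) (2 * k - n - (i - j)) \<and>
    F \<in> carrier_mat (2 * k) (i - j) \<and> G \<in> carrier_mat (2 * k) (i - j) \<and>
    null_basis (hconcat AA (- AA) + BB * P_mat k i * CC) (hconcat E F) \<and>
    null_basis (hconcat AA (- AA) + BB * P_mat k j * CC) (hconcat E G) \<and>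
    P_mat2 k j i * CC * F = id_block k j i \<and> P_mat2 k j i * CC * G = id_block k j i)"

lemma shared_null_bases_if_invertible:
  fixes AA BB CC Li Zi :: "complex mat"
  assumes AA: "AA \<in> carrier_mat n k" and BB: "BB \<in> carrier_mat n k" and CC: "CC \<in> carrier_mat k (2 * k)"
    and Li: "Li \<in> carrier_mat (2 * k) (2 * k)"
    and lift_inv: "lift_mat k CC * Li = 1\<^sub>m (2 * k)" "Li * lift_mat k CC = 1\<^sub>m (2 * k)"
    and Zi: "Zi \<in> carrier_mat n n"
    and lead_inv: "Zi * (hconcat AA BB * selection_mat (2 * k) n id) = 1\<^sub>m n"
      "(hconcat AA BB * selection_mat (2 * k) n id) * Zi = 1\<^sub>m n"
    and nj: "n \<le> k + j" and ji: "j < i" and ik: "i \<le> k"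
  shows "shared_null_bases n k AA BB CC i j"
proof -
  define dE where "dE = 2 * k - n - (i - j)"
  define posE where "posE c = (if c < k + j - n then n + c else c + n + (i - j))" for c
  define JE where "JE = (selection_mat (2 * k) dE posE :: complex mat)"
  define JF where "JF = (selection_mat (2 * k) (i - j) ((+) (k + j)) :: complex mat)"
  define K where "K h = kernel_proj Zi (hconcat AA (BB * P_mat k h))" for h
  have JE: "JE \<in> carrier_mat (2 * k) dE" and JF: "JF \<in> carrier_mat (2 * k) (i - j)"
    unfolding JE_def JF_def by simp_all
  have K: "K h \<in> carrier_mat (2 * k) (2 * k)" for h
    unfolding K_def by (rule kernel_proj_carrier[OF hconcat_mult_P_mat_carrier[OF AA BB]])
  have split: "selection_mat (2 * k) (2 * k - n) (\<lambda>c. if c < dE then posE c else k + j + (c - dE))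
      = hconcat JE JF"
    unfolding JE_def JF_def hconcat_selection_mat using nj ji ik by (simp add: dE_def)
  have pos: "bij_betw (\<lambda>c. if c < dE then posE c else k + j + (c - dE)) {0..<2 * k - n} {n..<2 * k}"
    unfolding dE_def posE_def by (rule bij_betw_free_positions[OF nj ji ik])
  have basis: "null_basis (hconcat AA (- AA) + BB * P_mat k h * CC)
      (hconcat (Li * (K h * JE)) (Li * (K h * JF)))" if "j \<le> h" "h \<le> k" for h
    using null_basis_lifted_kernel[OF AA BB CC Li lift_inv Zi lead_inv _ that(2) pos] nj that
    unfolding split K_def[symmetric]
    by (simp add: mult_hconcat[OF K JE JF] mult_hconcat[OF Li mult_carrier_mat[OF K JE] mult_carrier_mat[OF K JF]])
  have "hconcat AA (BB * P_mat k i) * JE = hconcat AA (BB * P_mat k j) * JE"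
    unfolding JE_def using nj ji ik
    by (intro hconcat_mult_P_mat_selection_cong[OF AA BB]) (auto simp: posE_def dE_def)
  then have common: "K i * JE = K j * JE"
    unfolding K_def
    using kernel_proj_mult[OF hconcat_mult_P_mat_carrier[OF AA BB] Zi JE] by metis
  have block: "P_mat2 k j i * CC * (Li * (K h * JF)) = id_block k j i" for h
    unfolding K_def JF_def
    by (rule P_mat2_mult_lifted_kernel_block[OF CC Li lift_inv(1) hconcat_mult_P_mat_carrier[OF AA BB] Zi nj])
  show ?thesis
    unfolding shared_null_bases_def
  proof (intro exI conjI)
    show "Li * (K i * JE) \<in> carrier_mat (2 * k) (2 * k - n - (i - j))"
      using mult_carrier_mat[OF Li mult_carrier_mat[OF K JE]] unfolding dE_def .
    show "Li * (K i * JF) \<in> carrier_mat (2 * k) (i - j)"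
      by (rule mult_carrier_mat[OF Li mult_carrier_mat[OF K JF]])
    show "Li * (K j * JF) \<in> carrier_mat (2 * k) (i - j)"
      by (rule mult_carrier_mat[OF Li mult_carrier_mat[OF K JF]])
    show "null_basis (hconcat AA (- AA) + BB * P_mat k i * CC) (hconcat (Li * (K i * JE)) (Li * (K i * JF)))"
      using basis ji ik by simp
    show "null_basis (hconcat AA (- AA) + BB * P_mat k j * CC) (hconcat (Li * (K i * JE)) (Li * (K j * JF)))"
      unfolding common using basis ji ik by simp
  qed (rule block)+
qed

section \<open>Genericity\<close>

definition mat_of_coords :: "nat \<Rightarrow> nat \<Rightarrow> nat \<Rightarrow> (nat \<Rightarrow> complex) \<Rightarrow> complex mat" where
  "mat_of_coords t nr nc x = mat nr nc (\<lambda>(r, c). x (prod_encode (t, prod_encode (r, c))))"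

lemma mat_of_coords_coords3:
  "M1 \<in> carrier_mat r1 c1 \<Longrightarrow> mat_of_coords 0 r1 c1 (coords3 M1 M2 M3) = M1"
  "M2 \<in> carrier_mat r2 c2 \<Longrightarrow> mat_of_coords 1 r2 c2 (coords3 M1 M2 M3) = M2"
  "M3 \<in> carrier_mat r3 c3 \<Longrightarrow> mat_of_coords 2 r3 c3 (coords3 M1 M2 M3) = M3"
  by (rule eq_matI; simp add: mat_of_coords_def coords3_def mcoord_def)+

lemma poly_fun_index_mat_of_coords:
  "r < nr \<Longrightarrow> c < nc \<Longrightarrow> poly_fun (\<lambda>x. mat_of_coords t nr nc x $$ (r, c))"
  by (simp add: mat_of_coords_def pf_var)

definition genericity_poly :: "nat \<Rightarrow> nat \<Rightarrow> (nat \<Rightarrow> complex) \<Rightarrow> complex" where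
  "genericity_poly n k x = det (lift_mat k (mat_of_coords 2 k (2 * k) x)) *
     det (hconcat (mat_of_coords 0 n k x) (mat_of_coords 1 n k x) * selection_mat (2 * k) n id)"

lemma poly_fun_genericity_poly:
  assumes n: "n \<le> 2 * k"
  shows "poly_fun (genericity_poly n k)"
proof -
  have lift: "poly_fun (\<lambda>x. det (lift_mat k (mat_of_coords 2 k (2 * k) x)))"
  proof (rule poly_fun_det)
    show "lift_mat k (mat_of_coords 2 k (2 * k) x) \<in> carrier_mat (2 * k) (2 * k)" for x
      by (rule lift_mat_carrier) (simp add: mat_of_coords_def)
    show "poly_fun (\<lambda>x. lift_mat k (mat_of_coords 2 k (2 * k) x) $$ (r, c))"
      if "r < 2 * k" "c < 2 * k" for r c
      using that by (cases "r < k")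
        (simp_all add: index_lift_mat mat_of_coords_def pf_const pf_var)
  qed
  have lead: "poly_fun (\<lambda>x. det (hconcat (mat_of_coords 0 n k x) (mat_of_coords 1 n k x) * selection_mat (2 * k) n id))"
  proof (rule poly_fun_det)
    have carrier: "hconcat (mat_of_coords 0 n k x) (mat_of_coords 1 n k x) \<in> carrier_mat n (2 * k)" for x
      using hconcat_carrier[of "mat_of_coords 0 n k x" n k "mat_of_coords 1 n k x" k]
      by (simp add: mat_of_coords_def mult_2)
    show "hconcat (mat_of_coords 0 n k x) (mat_of_coords 1 n k x) * selection_mat (2 * k) n id \<in> carrier_mat n n" for x
      by (rule mult_carrier_mat[OF carrier selection_mat_carrier])
    show "poly_fun (\<lambda>x. (hconcat (mat_of_coords 0 n k x) (mat_of_coords 1 n k x) * selection_mat (2 * k) n id) $$ (r, c))"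
      if "r < n" "c < n" for r c
    proof -
      have "(hconcat (mat_of_coords 0 n k x) (mat_of_coords 1 n k x) * selection_mat (2 * k) n id) $$ (r, c)
          = (if c < k then mat_of_coords 0 n k x $$ (r, c) else mat_of_coords 1 n k x $$ (r, c - k))" for x
        using that n
        by (subst mult_selection_mat[OF carrier]) (auto simp: index_hconcat[of _ n k _ k] mat_of_coords_def)
      then show ?thesis
        using that n by (cases "c < k") (simp_all add: poly_fun_index_mat_of_coords)
    qed
  qed
  have "genericity_poly n k = (\<lambda>x. det (lift_mat k (mat_of_coords 2 k (2 * k) x)) *
      det (hconcat (mat_of_coords 0 n k x) (mat_of_coords 1 n k x) * selection_mat (2 * k) n id))"
    by (rule ext) (simp add: genericity_poly_def)
  then show ?thesis using pf_mul[OF lift lead] by simp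
qed

lemma genericity_poly_coords3:
  assumes "AA \<in> carrier_mat n k" and "BB \<in> carrier_mat n k" and "CC \<in> carrier_mat k (2 * k)"
  shows "genericity_poly n k (coords3 AA BB CC)
    = det (lift_mat k CC) * det (hconcat AA BB * selection_mat (2 * k) n id)"
  unfolding genericity_poly_def mat_of_coords_coords3(1)[OF assms(1)]
    mat_of_coords_coords3(2)[OF assms(2)] mat_of_coords_coords3(3)[OF assms(3)] ..

lemma genericity_poly_witness:
  assumes n: "n \<le> 2 * k"
  shows "genericity_poly n k (coords3 (selection_mat n k id) (selection_mat n k ((+) k))
    (transpose_mat (selection_mat (2 * k) k ((+) k)))) = 1"
proof -
  define Cw :: "complex mat" where "Cw = transpose_mat (selection_mat (2 * k) k ((+) k))"
  have Cw: "Cw \<in> carrier_mat k (2 * k)" unfolding Cw_def by simp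
  have Cw_index: "Cw $$ (s, c) = (if c = k + s then 1 else 0)" if "s < k" "c < 2 * k" for s c
    using that unfolding Cw_def by simp
  have "lift_mat k Cw = four_block_mat (1\<^sub>m k) (- 1\<^sub>m k) (0\<^sub>m k k) (1\<^sub>m k)"
    by (rule eq_matI) (use lift_mat_carrier[OF Cw] in \<open>auto simp: index_lift_mat[OF Cw] Cw_index mult_2\<close>)
  then have det_lift: "det (lift_mat k Cw) = 1"
    by (simp add: det_four_block_mat_lower_left_zero[of _ k _ k])
  have "hconcat (selection_mat n k id) (selection_mat n k ((+) k)) = (selection_mat n (2 * k) id :: complex mat)"
    unfolding hconcat_selection_mat mult_2 by (rule eq_matI) auto
  then have "hconcat (selection_mat n k id) (selection_mat n k ((+) k)) * selection_mat (2 * k) n id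
      = mat n n (\<lambda>(r, c). (selection_mat n (2 * k) id :: complex mat) $$ (r, id c))"
    using n by (simp add: mult_selection_mat[OF selection_mat_carrier])
  also have "\<dots> = 1\<^sub>m n"
    using n by (intro eq_matI) auto
  finally have lead: "hconcat (selection_mat n k id) (selection_mat n k ((+) k)) * selection_mat (2 * k) n id
      = (1\<^sub>m n :: complex mat)" .
  show ?thesis
    unfolding Cw_def[symmetric]
    by (subst genericity_poly_coords3) (use Cw det_lift lead in simp_all)
qed

lemma generic3_trivial:
  assumes "\<And>M1 M2 M3. Q M1 M2 M3"
  shows "generic3 r1 c1 r2 c2 r3 c3 Q"
  unfolding generic3_def
  by (intro exI[of _ "\<lambda>x. 1"] conjI pf_const bexI[OF _ zero_carrier_mat]) (simp_all add: assms)

lemma generic3_mono: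
  assumes "generic3 r1 c1 r2 c2 r3 c3 P"
    and "\<And>M1 M2 M3. M1 \<in> carrier_mat r1 c1 \<Longrightarrow> M2 \<in> carrier_mat r2 c2 \<Longrightarrow> M3 \<in> carrier_mat r3 c3 \<Longrightarrow>
      P M1 M2 M3 \<Longrightarrow> Q M1 M2 M3"
  shows "generic3 r1 c1 r2 c2 r3 c3 Q"
  using assms unfolding generic3_def by blast

lemma generic3_shared_null_bases:
  assumes n: "n \<le> 2 * k"
  shows "generic3 n k n k k (2 * k) (\<lambda>AA BB CC. \<forall>i j. n \<le> k + j \<and> j < i \<and> i \<le> k \<longrightarrow>
    shared_null_bases n k AA BB CC i j)"
  unfolding generic3_def
proof (intro exI[of _ "genericity_poly n k"] conjI ballI impI allI)
  show "poly_fun (genericity_poly n k)" by (rule poly_fun_genericity_poly[OF n])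
  show "\<exists>M1\<in>carrier_mat n k. \<exists>M2\<in>carrier_mat n k. \<exists>M3\<in>carrier_mat k (2 * k).
      genericity_poly n k (coords3 M1 M2 M3) \<noteq> 0"
    by (rule bexI[of _ "selection_mat n k id"], rule bexI[of _ "selection_mat n k ((+) k)"],
        rule bexI[of _ "transpose_mat (selection_mat (2 * k) k ((+) k))"])
      (use genericity_poly_witness[OF n] in simp_all)
next
  fix AA BB CC :: "complex mat" and i j :: nat
  assume AA: "AA \<in> carrier_mat n k" and BB: "BB \<in> carrier_mat n k" and CC: "CC \<in> carrier_mat k (2 * k)"
    and nonzero: "genericity_poly n k (coords3 AA BB CC) \<noteq> 0"
    and range: "n \<le> k + j \<and> j < i \<and> i \<le> k"
  have "det (lift_mat k CC) \<noteq> 0" and "det (hconcat AA BB * selection_mat (2 * k) n id) \<noteq> 0"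
    using nonzero by (simp_all add: genericity_poly_coords3[OF AA BB CC])
  moreover have "hconcat AA BB * selection_mat (2 * k) n id \<in> carrier_mat n n"
    using hconcat_carrier[OF AA BB] by (simp add: mult_2)
  ultimately obtain Li Zi where "Li \<in> carrier_mat (2 * k) (2 * k)"
    "lift_mat k CC * Li = 1\<^sub>m (2 * k)" "Li * lift_mat k CC = 1\<^sub>m (2 * k)"
    and "Zi \<in> carrier_mat n n" "hconcat AA BB * selection_mat (2 * k) n id * Zi = 1\<^sub>m n"
      "Zi * (hconcat AA BB * selection_mat (2 * k) n id) = 1\<^sub>m n"
    using inverse_mat_of_det[OF lift_mat_carrier[OF CC]] inverse_mat_of_det by metis
  with range show "shared_null_bases n k AA BB CC i j"
    by (intro shared_null_bases_if_invertible[OF AA BB CC]) simp_all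
qed

theorem lemma2p2:
  fixes k a b :: nat and A B :: "complex vec set" and hstar h0 :: int
  assumes "k \<ge> 1"
    and "irreducible_alg k A" and "irreducible_alg k B"
    and "alg_dim k A = int a" and "alg_dim k B = int b" and "a \<ge> b"
    and "int b \<ge> hstar" and "hstar > alg_dim k (A \<inter> B)"
    and "max (int a + int b - int k) 0 \<le> h0"
    and "\<forall>Z. irr_component k (A \<inter> B) Z \<longrightarrow> h0 \<le> alg_dim k Z"
  shows "generic3 (a + b) k (a + b) k k (2 * k)
     (\<lambda>AA BB CC. \<forall>i j :: nat. h0 \<le> int j \<and> j < i \<and> int i \<le> hstar \<longrightarrow>
        (let Abf = hconcat AA (- AA);
             Y = (\<lambda>h. Abf + BB * P_mat k h * CC);
             m = 2 * k - a - b
         in \<exists>E F G. E \<in> carrier_mat (2 * k) (m - (i - j)) \<and>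
                   F \<in> carrier_mat (2 * k) (i - j) \<and> G \<in> carrier_mat (2 * k) (i - j) \<and>
                   null_basis (Y i) (hconcat E F) \<and>
                   null_basis (Y j) (hconcat E G) \<and>
                   P_mat2 k j i * CC * F = id_block k j i \<and>
                   P_mat2 k j i * CC * G = id_block k j i))"
proof -
  have range: "a + b \<le> k + j \<and> i \<le> k" if "h0 \<le> int j" "j < i" "int i \<le> hstar" for i j :: nat
    using that assms(6,7,9) by simp
  show ?thesis
  proof (cases "a + b \<le> 2 * k")
    case False
    then show ?thesis using range by (intro generic3_trivial) force
  next
    case True
    show ?thesis
      by (rule generic3_mono[OF generic3_shared_null_bases[OF True]])
        (unfold Let_def diff_diff_left[of "2 * k" a b] shared_null_bases_def, use range in blast)
  qed
qed

end
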